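(* Let $p$, $F$, $K$, $G=\langle\sigma\rangle$, $J$, $J_1$, $\epsilon(F^\times)$ be as in the context. (a) If $\xi_p\notin N(K^\times)$, then $J_1=\epsilon(F^\times)$. (b) If $\xi_p\in N(K^\times)$, then there exist $\lambda,\delta\in K^\times$ with $N_{K/F}(\lambda)=\xi_p$ and $\sigma(\delta)/\delta=\lambda^p$, and for any such $\delta$ one has $J_1=\epsilon(F^\times)\oplus\langle[\delta]\rangle$ (internal direct sum of $\mathbb{F}_p$-spaces).
   Context: Let $p$ be a prime and $F$ a field of characteristic different from $p$ containing a primitive $p$th root of unity $\xi_p$ (for $p=2$, $\xi_2=-1$). Let $a\in F^\times\setminus F^{\times p}$ and $K=F(\sqrt[p]{a})$; $K^\times=K\setminus\{0\}$. Let $G=\mathrm{Gal}(K/F)=\langle\sigma\rangle$, where $\sigma(\sqrt[p]{a})/\sqrt[p]{a}=\xi_p$. Let $J=K^\times/K^{\times p}$ with elements $[\gamma]$, $J_1=J^G=\ker(\sigma-1)$ the $G$-fixed submodule, and $\epsilon(F^\times)=F^\times K^{\times p}/K^{\times p}\subseteq J$ the image of $F^\times$. $N(K^\times)$ denotes the norm group $N_{K/F}(K^\times)\subseteq F^\times$. *)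

theory Defs
  imports "HOL-Computational_Algebra.Primes"
begin

text \<open>F is a subfield of the field K (K is the whole ambient type).\<close>
definition is_subfield :: "'k::field set \<Rightarrow> bool" where
  "is_subfield F \<longleftrightarrow> 0 \<in> F \<and> 1 \<in> F \<and>
     (\<forall>x\<in>F. \<forall>y\<in>F. x + y \<in> F \<and> x - y \<in> F \<and> x * y \<in> F) \<and>
     (\<forall>x\<in>F. x \<noteq> 0 \<longrightarrow> inverse x \<in> F)"

definition is_F_automorphism :: "'k::field set \<Rightarrow> ('k \<Rightarrow> 'k) \<Rightarrow> bool" where
  "is_F_automorphism F s \<longleftrightarrow> bij s \<and>
     (\<forall>x y. s (x + y) = s x + s y) \<and> (\<forall>x y. s (x * y) = s x * s y) \<and> s 1 = 1 \<and>
     (\<forall>x\<in>F. s x = x)"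

definition primitive_root :: "nat \<Rightarrow> 'k::field \<Rightarrow> bool" where
  "primitive_root p z \<longleftrightarrow> z ^ p = 1 \<and> (\<forall>k. 0 < k \<and> k < p \<longrightarrow> z ^ k \<noteq> 1)"

definition norm_KF :: "nat \<Rightarrow> ('k::field \<Rightarrow> 'k) \<Rightarrow> 'k \<Rightarrow> 'k" where
  "norm_KF p s x = (\<Prod>i<p. (s ^^ i) x)"

text \<open>The class [g] of g in J = K^x / K^x^p.\<close>
definition pclass :: "nat \<Rightarrow> 'k::field \<Rightarrow> 'k set" where
  "pclass p g = {g * u ^ p | u. u \<noteq> 0}"

definition Jgrp :: "nat \<Rightarrow> 'k::field set set" where
  "Jgrp p = pclass p ` (UNIV - {0})"

text \<open>J_1 = J^G: classes fixed by the induced action [g] \<mapsto> [sigma g].\<close>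
definition J1 :: "nat \<Rightarrow> ('k::field \<Rightarrow> 'k) \<Rightarrow> 'k set set" where
  "J1 p s = {pclass p g | g. g \<noteq> 0 \<and> pclass p (s g) = pclass p g}"

definition epsF :: "nat \<Rightarrow> 'k::field set \<Rightarrow> 'k set set" where
  "epsF p F = pclass p ` (F - {0})"

definition cyc_class :: "nat \<Rightarrow> 'k::field \<Rightarrow> 'k set set" where
  "cyc_class p d = {pclass p (d ^ i) | i. True}"

definition class_prod :: "nat \<Rightarrow> 'k::field set set \<Rightarrow> 'k set set \<Rightarrow> 'k set set" where
  "class_prod p A B = {pclass p (x * y) | x y. x \<noteq> 0 \<and> y \<noteq> 0 \<and> pclass p x \<in> A \<and> pclass p y \<in> B}"

definition internal_direct_sum :: "nat \<Rightarrow> 'k::field set set \<Rightarrow> 'k set set \<Rightarrow> 'k set set \<Rightarrow> bool" where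
  "internal_direct_sum p C A B \<longleftrightarrow> C = class_prod p A B \<and> A \<inter> B = {pclass p 1}"

end

(*
  A class [gamma] of K^x / K^x^p fixed by sigma means sigma gamma = gamma u^p; taking norms
  gives N(u)^p = 1, so N(u) = xi^c.  If xi is not a norm, p divides c, so N(u) = 1 and
  Hilbert 90 writes u = sigma beta / beta; then gamma / beta^p is sigma-invariant, hence in F.
  If N(lambda) = xi and sigma delta = delta lambda^p, the same argument applied to
  gamma / delta^c and u / lambda^c puts [gamma] in eps(F^x) + <[delta]>.  The sum is direct
  because [delta^i] = [f] with f in F forces, after taking norms, xi^i = 1.
  Hilbert 90 itself uses the resolvent sum_i (k sigma(k) ... sigma^(i-1)(k)) sigma^i(theta),
  which is nonzero for some theta = alpha^j by orthogonality of the characters j -> xi^(ij).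
*)

theory Submission
  imports Defs "HOL-Computational_Algebra.Polynomial" "HOL-Number_Theory.Cong"
begin

lemma primitive_root_nonzero:
  assumes "primitive_root n (z::'k::field)" "n > 0"
  shows "z \<noteq> 0"
  using assms unfolding primitive_root_def by (metis zero_neq_one zero_power)

lemma primitive_root_power_mod:
  assumes "primitive_root n (z::'k::field)"
  shows "z ^ m = z ^ (m mod n)"
proof -
  have "z ^ m = z ^ (n * (m div n) + m mod n)" by simp
  also have "\<dots> = (z ^ n) ^ (m div n) * z ^ (m mod n)" by (simp only: power_add power_mult)
  finally show ?thesis using assms by (simp add: primitive_root_def)
qed

lemma primitive_root_power_power_eq_1:
  assumes "primitive_root n (z::'k::field)"
  shows "(z ^ m) ^ n = 1"
  using assms unfolding primitive_root_def by (metis mult.commute power_mult power_one)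

lemma primitive_root_power_eq_1_iff:
  assumes "primitive_root n (z::'k::field)" "n > 0"
  shows "z ^ m = 1 \<longleftrightarrow> n dvd m"
proof
  assume "z ^ m = 1"
  then show "n dvd m"
    using assms primitive_root_power_mod[OF assms(1), of m] unfolding primitive_root_def
    by (metis mod_less_divisor mod_0_imp_dvd neq0_conv)
next
  assume "n dvd m"
  then show "z ^ m = 1" using assms(1) by (auto simp: power_mult primitive_root_def)
qed

lemma primitive_root_power_inj_on:
  assumes "primitive_root n (z::'k::field)" "n > 0"
  shows "inj_on (\<lambda>m. z ^ m) {..<n}"
proof (rule linorder_inj_onI')
  fix i j assume "i \<in> {..<n}" "j \<in> {..<n}" "i < j"
  have "z ^ j = z ^ i * z ^ (j - i)" using \<open>i < j\<close> by (simp flip: power_add)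
  moreover have "z ^ (j - i) \<noteq> 1"
    using \<open>i < j\<close> \<open>j \<in> {..<n}\<close> assms(1) unfolding primitive_root_def by auto
  ultimately show "z ^ i \<noteq> z ^ j" using primitive_root_nonzero[OF assms] by auto
qed

text \<open>The \<open>n\<close> distinct powers of \<open>z\<close> exhaust the at most \<open>n\<close> roots of \<open>X\<^sup>n - 1\<close>.\<close>
lemma root_of_unity_eq_primitive_root_power:
  assumes "primitive_root n (z::'k::field)" "n > 0" "x ^ n = 1"
  shows "\<exists>m. x = z ^ m"
proof -
  define R where "R = {y::'k. y ^ n = 1}"
  define q :: "'k poly" where "q = monom 1 n - 1"
  have R_roots: "R = {y. poly q y = 0}" by (simp add: R_def q_def poly_monom)
  have "poly q 0 \<noteq> 0" using \<open>n > 0\<close> by (simp add: q_def poly_monom power_0_left)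
  then have "q \<noteq> 0" by auto
  have "degree q \<le> n" unfolding q_def by (intro degree_diff_le) (simp_all add: degree_monom_le)
  then have "finite R" "card R \<le> n"
    using poly_roots_finite card_poly_roots_bound \<open>q \<noteq> 0\<close> R_roots by fastforce+
  have powers: "(\<lambda>m. z ^ m) ` {..<n} \<subseteq> R"
    using primitive_root_power_power_eq_1[OF assms(1)] unfolding R_def by auto
  moreover have "card ((\<lambda>m. z ^ m) ` {..<n}) = n"
    using card_image[OF primitive_root_power_inj_on[OF assms(1,2)]] by simp
  ultimately have "(\<lambda>m. z ^ m) ` {..<n} = R"
    using \<open>finite R\<close> \<open>card R \<le> n\<close> by (metis card_mono card_subset_eq le_antisym)
  then show ?thesis using assms(3) unfolding R_def by blast
qed

lemma sum_primitive_root_powers: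
  assumes "primitive_root n (z::'k::field)" "n > 0"
  shows "(\<Sum>j<n. z ^ (i * j)) = (if n dvd i then of_nat n else 0)"
proof (cases "n dvd i")
  case True
  then have "z ^ (i * j) = 1" for j by (simp add: primitive_root_power_eq_1_iff[OF assms])
  with True show ?thesis by simp
next
  case False
  then have "z ^ i \<noteq> 1" using primitive_root_power_eq_1_iff[OF assms] by simp
  then show ?thesis
    using False geometric_sum[of "z ^ i" n] primitive_root_power_power_eq_1[OF assms(1)]
    by (simp add: power_mult)
qed

text \<open>Orthogonality of the characters \<open>j \<mapsto> z\<^sup>i\<^sup>j\<close>: only the trivial one survives.\<close>
lemma sum_sum_primitive_root_powers:
  assumes "primitive_root n (z::'k::field)" "n > 0"
  shows "(\<Sum>i<n. \<Sum>j<n. f j * z ^ (i * j)) = of_nat n * f 0"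
proof -
  have "(\<Sum>i<n. \<Sum>j<n. f j * z ^ (i * j)) = (\<Sum>j<n. f j * (\<Sum>i<n. z ^ (j * i)))"
    by (subst sum.swap) (simp add: sum_distrib_left mult.commute)
  also have "\<dots> = (\<Sum>j<n. if j = 0 then f j * of_nat n else 0)"
    using sum_primitive_root_powers[OF assms] by (intro sum.cong) (auto dest: dvd_imp_le)
  finally show ?thesis using assms(2) by (simp add: mult.commute)
qed

lemma prime_primitive_root_power_generates:
  assumes "prime p" "primitive_root p (z::'k::field)" "\<not> p dvd c"
  shows "\<exists>m. (z ^ c) ^ m = z"
proof -
  have "coprime c p" using prime_imp_coprime[OF assms(1,3)] by (simp add: coprime_commute)
  then obtain m where "[c * m = 1] (mod p)" using cong_solve_coprime_nat by auto
  then have "(c * m) mod p = 1" using prime_gt_1_nat[OF assms(1)] by (simp add: cong_def)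
  then have "(z ^ c) ^ m = z" using primitive_root_power_mod[OF assms(2), of "c * m"] by (simp add: power_mult)
  then show ?thesis ..
qed

lemma pclass_mult_power:
  assumes "(u::'k::field) \<noteq> 0"
  shows "pclass p (x * u ^ p) = pclass p x"
proof (intro set_eqI iffI)
  fix y assume "y \<in> pclass p (x * u ^ p)"
  then obtain v where "v \<noteq> 0" "y = x * (u * v) ^ p" unfolding pclass_def by (auto simp: power_mult_distrib)
  then show "y \<in> pclass p x" unfolding pclass_def using assms by auto
next
  fix y assume "y \<in> pclass p x"
  then obtain v where "v \<noteq> 0" "y = x * u ^ p * (v / u) ^ p" unfolding pclass_def using assms by (auto simp: power_divide)
  then show "y \<in> pclass p (x * u ^ p)" unfolding pclass_def using assms by auto
qed

lemma pclass_eqD: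
  assumes "pclass p x = pclass p (y::'k::field)"
  shows "\<exists>u. u \<noteq> 0 \<and> x = y * u ^ p"
proof -
  have "x \<in> pclass p x" unfolding pclass_def by (auto intro: exI[of _ 1])
  then show ?thesis using assms unfolding pclass_def by auto
qed

lemma prod_lessThan_rotate:
  fixes f :: "nat \<Rightarrow> 'a::comm_monoid_mult"
  assumes "f n = f 0"
  shows "(\<Prod>i<n. f (Suc i)) = (\<Prod>i<n. f i)"
proof (cases n)
  case (Suc m)
  then have "(\<Prod>i<n. f (Suc i)) = f 0 * (\<Prod>i<m. f (Suc i))"
    using assms by (simp add: mult.commute)
  also have "\<dots> = (\<Prod>i<n. f i)" using Suc by (simp only: prod.lessThan_Suc_shift)
  finally show ?thesis .
qed simp

lemma sum_lessThan_rotate: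
  fixes f :: "nat \<Rightarrow> 'a::comm_monoid_add"
  assumes "f n = f 0"
  shows "(\<Sum>i<n. f (Suc i)) = (\<Sum>i<n. f i)"
proof (cases n)
  case (Suc m)
  then have "(\<Sum>i<n. f (Suc i)) = f 0 + (\<Sum>i<m. f (Suc i))"
    using assms by (simp add: add.commute)
  also have "\<dots> = (\<Sum>i<n. f i)" using Suc by (simp only: sum.lessThan_Suc_shift)
  finally show ?thesis .
qed simp

locale F_automorphism =
  fixes F :: "'k::field set" and \<sigma> :: "'k \<Rightarrow> 'k"
  assumes is_F_automorphism: "is_F_automorphism F \<sigma>"
begin

lemma hom_add: "\<sigma> (x + y) = \<sigma> x + \<sigma> y"
  and hom_mult: "\<sigma> (x * y) = \<sigma> x * \<sigma> y"
  and hom_one: "\<sigma> 1 = 1"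
  and hom_fixes: "x \<in> F \<Longrightarrow> \<sigma> x = x"
  using is_F_automorphism unfolding is_F_automorphism_def by blast+

lemma hom_zero: "\<sigma> 0 = 0"
  using hom_add[of 0 0] by (metis add_cancel_left_right add_0)

lemma hom_mult_inverse: "x \<noteq> 0 \<Longrightarrow> \<sigma> x * \<sigma> (inverse x) = 1"
  by (simp flip: hom_mult add: hom_one)

lemma hom_nonzero: "x \<noteq> 0 \<Longrightarrow> \<sigma> x \<noteq> 0"
  using hom_mult_inverse by force

lemma hom_inverse: "\<sigma> (inverse x) = inverse (\<sigma> x)"
  by (cases "x = 0") (simp_all add: hom_zero inverse_unique[OF hom_mult_inverse])

lemma hom_divide: "\<sigma> (x / y) = \<sigma> x / \<sigma> y"
  by (simp add: divide_inverse hom_mult hom_inverse)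

lemma hom_power: "\<sigma> (x ^ n) = \<sigma> x ^ n"
  by (induction n) (simp_all add: hom_one hom_mult)

lemma hom_sum: "\<sigma> (\<Sum>a\<in>A. f a) = (\<Sum>a\<in>A. \<sigma> (f a))"
  using sum_comp_morphism[of \<sigma> f A] by (simp add: hom_zero hom_add comp_def)

lemma hom_prod: "\<sigma> (\<Prod>a\<in>A. f a) = (\<Prod>a\<in>A. \<sigma> (f a))"
  by (induction A rule: infinite_finite_induct) (simp_all add: hom_one hom_mult)

lemma F_automorphism_funpow: "F_automorphism F (\<sigma> ^^ i)"
proof -
  have "bij (\<sigma> ^^ i)"
    using is_F_automorphism bij_betw_funpow unfolding is_F_automorphism_def by blast
  moreover have "(\<sigma> ^^ i) (x + y) = (\<sigma> ^^ i) x + (\<sigma> ^^ i) y"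
    and "(\<sigma> ^^ i) (x * y) = (\<sigma> ^^ i) x * (\<sigma> ^^ i) y"
    and "(\<sigma> ^^ i) 1 = 1" and "x \<in> F \<Longrightarrow> (\<sigma> ^^ i) x = x" for x y
    by (induction i) (simp_all add: hom_add hom_mult hom_one hom_fixes)
  ultimately show ?thesis unfolding F_automorphism_def is_F_automorphism_def by blast
qed

lemma pclass_in_J1_iff:
  assumes "g \<noteq> 0"
  shows "pclass p g \<in> J1 p \<sigma> \<longleftrightarrow> (\<exists>u. u \<noteq> 0 \<and> \<sigma> g = g * u ^ p)"
proof
  assume "pclass p g \<in> J1 p \<sigma>"
  then obtain h where h: "pclass p g = pclass p h" "pclass p (\<sigma> h) = pclass p h"
    unfolding J1_def by auto
  obtain v where v: "v \<noteq> 0" "g = h * v ^ p" using pclass_eqD[OF h(1)] by blast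
  obtain w where w: "w \<noteq> 0" "\<sigma> h = h * w ^ p" using pclass_eqD[OF h(2)] by blast
  have "\<sigma> g = h * v ^ p * (w * \<sigma> v / v) ^ p"
    using v w by (simp add: hom_mult hom_power power_mult_distrib power_divide)
  moreover have "w * \<sigma> v / v \<noteq> 0" using v w hom_nonzero by simp
  ultimately show "\<exists>u. u \<noteq> 0 \<and> \<sigma> g = g * u ^ p" using v(2) by blast
next
  assume "\<exists>u. u \<noteq> 0 \<and> \<sigma> g = g * u ^ p"
  then show "pclass p g \<in> J1 p \<sigma>" unfolding J1_def using assms pclass_mult_power by fastforce
qed

lemma J1E:
  assumes "X \<in> J1 p \<sigma>"
  obtains \<gamma> u where "X = pclass p \<gamma>" "\<gamma> \<noteq> 0" "u \<noteq> 0" "\<sigma> \<gamma> = \<gamma> * u ^ p"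
  using assms pclass_in_J1_iff unfolding J1_def by blast

lemma epsF_subset_J1: "epsF p F \<subseteq> J1 p \<sigma>"
  unfolding epsF_def J1_def using hom_fixes by fastforce

lemma class_prod_subset_J1:
  assumes "A \<subseteq> J1 p \<sigma>" "B \<subseteq> J1 p \<sigma>"
  shows "class_prod p A B \<subseteq> J1 p \<sigma>"
proof
  fix X assume "X \<in> class_prod p A B"
  then obtain x y where xy: "X = pclass p (x * y)" "x \<noteq> 0" "y \<noteq> 0"
    "pclass p x \<in> J1 p \<sigma>" "pclass p y \<in> J1 p \<sigma>"
    unfolding class_prod_def using assms by blast
  obtain u v where "u \<noteq> 0" "\<sigma> x = x * u ^ p" "v \<noteq> 0" "\<sigma> y = y * v ^ p"
    using xy pclass_in_J1_iff by blast
  then have "\<sigma> (x * y) = x * y * (u * v) ^ p" "u * v \<noteq> 0" "x * y \<noteq> 0"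
    using xy by (simp_all add: hom_mult power_mult_distrib)
  then show "X \<in> J1 p \<sigma>" using xy(1) pclass_in_J1_iff[where g = "x * y"] by blast
qed

end

locale cyclic_kummer = F_automorphism F \<sigma>
  for F :: "'k::field set" and \<sigma> +
  fixes p :: nat and \<xi> \<alpha> :: 'k
  assumes prime_p: "prime p"
    and of_nat_p_nonzero: "of_nat p \<noteq> (0::'k)"
    and subfield: "is_subfield F"
    and xi_in_F: "\<xi> \<in> F" and primitive_xi: "primitive_root p \<xi>"
    and alpha_nonzero: "\<alpha> \<noteq> 0"
    and power_basis: "UNIV = {\<Sum>i<p. c i * \<alpha> ^ i | c. \<forall>i. c i \<in> F}"
    and sigma_alpha: "\<sigma> \<alpha> = \<xi> * \<alpha>"
begin

abbreviation N :: "'k \<Rightarrow> 'k" where "N \<equiv> norm_KF p \<sigma>"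

lemmas funpow_mult = F_automorphism.hom_mult[OF F_automorphism_funpow]
  and funpow_power = F_automorphism.hom_power[OF F_automorphism_funpow]
  and funpow_fixes = F_automorphism.hom_fixes[OF F_automorphism_funpow]
  and funpow_nonzero = F_automorphism.hom_nonzero[OF F_automorphism_funpow]
  and funpow_sum = F_automorphism.hom_sum[OF F_automorphism_funpow]

lemma p_pos: "p > 0"
  using prime_p prime_gt_0_nat by blast

lemma xi_nonzero: "\<xi> \<noteq> 0"
  using primitive_root_nonzero[OF primitive_xi p_pos] .

lemma obtain_coordinates:
  obtains c where "\<forall>i. c i \<in> F" "x = (\<Sum>i<p. c i * \<alpha> ^ i)"
  using power_basis by blast

lemma funpow_alpha_power: "(\<sigma> ^^ i) (\<alpha> ^ j) = \<xi> ^ (i * j) * \<alpha> ^ j"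
  by (induction i)
    (simp_all add: hom_mult hom_power hom_fixes[OF xi_in_F] sigma_alpha power_mult_distrib power_add)

lemma funpow_coordinates:
  assumes "\<forall>j. c j \<in> F"
  shows "(\<sigma> ^^ i) (\<Sum>j<p. c j * \<alpha> ^ j) = (\<Sum>j<p. c j * \<alpha> ^ j * \<xi> ^ (i * j))"
  using assms by (simp add: funpow_sum funpow_mult funpow_fixes funpow_alpha_power mult_ac)

lemma funpow_p_eq_id: "(\<sigma> ^^ p) x = x"
proof -
  obtain c where c: "\<forall>j. c j \<in> F" "x = (\<Sum>j<p. c j * \<alpha> ^ j)" by (rule obtain_coordinates)
  have "\<xi> ^ (p * j) = 1" for j
    using primitive_xi by (simp add: power_mult primitive_root_def)
  then show ?thesis using funpow_coordinates[OF c(1), of p] c(2) by simp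
qed

text \<open>The trace of \<open>K/F\<close> picks out the constant coordinate.\<close>
lemma trace_coordinates:
  assumes "\<forall>j. c j \<in> F"
  shows "(\<Sum>i<p. (\<sigma> ^^ i) (\<Sum>j<p. c j * \<alpha> ^ j)) = of_nat p * c 0"
  using sum_sum_primitive_root_powers[OF primitive_xi p_pos, of "\<lambda>j. c j * \<alpha> ^ j"]
  by (simp add: funpow_coordinates[OF assms])

lemma fixed_field:
  assumes "\<sigma> x = x"
  shows "x \<in> F"
proof -
  obtain c where c: "\<forall>j. c j \<in> F" "x = (\<Sum>j<p. c j * \<alpha> ^ j)" by (rule obtain_coordinates)
  have "(\<sigma> ^^ i) x = x" for i by (induction i) (simp_all add: assms)
  then have "of_nat p * x = of_nat p * c 0" using trace_coordinates[OF c(1)] c(2) by simp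
  then show ?thesis using of_nat_p_nonzero c(1) by simp
qed

lemma norm_mult: "N (x * y) = N x * N y"
  unfolding norm_KF_def by (simp add: funpow_mult prod.distrib)

lemma norm_power: "N (x ^ n) = N x ^ n"
  unfolding norm_KF_def by (simp add: funpow_power prod_power_distrib)

lemma norm_nonzero: "x \<noteq> 0 \<Longrightarrow> N x \<noteq> 0"
  unfolding norm_KF_def by (simp add: funpow_nonzero)

lemma norm_of_F: "x \<in> F \<Longrightarrow> N x = x ^ p"
  unfolding norm_KF_def by (simp add: funpow_fixes)

lemma norm_sigma: "N (\<sigma> x) = N x"
  using prod_lessThan_rotate[of "\<lambda>i. (\<sigma> ^^ i) x" p]
  unfolding norm_KF_def by (simp add: funpow_p_eq_id funpow_swap1)

definition hilbert_resolvent :: "'k \<Rightarrow> 'k \<Rightarrow> 'k" where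
  "hilbert_resolvent k \<theta> = (\<Sum>i<p. (\<Prod>t<i. (\<sigma> ^^ t) k) * (\<sigma> ^^ i) \<theta>)"

lemma partial_norm_Suc: "k * \<sigma> (\<Prod>t<i. (\<sigma> ^^ t) k) = (\<Prod>t<Suc i. (\<sigma> ^^ t) k)"
  by (simp only: prod.lessThan_Suc_shift) (simp add: hom_prod)

lemma sigma_hilbert_resolvent:
  assumes "N k = 1"
  shows "k * \<sigma> (hilbert_resolvent k \<theta>) = hilbert_resolvent k \<theta>"
proof -
  define g where "g i = (\<Prod>t<i. (\<sigma> ^^ t) k) * (\<sigma> ^^ i) \<theta>" for i
  have "k * \<sigma> (hilbert_resolvent k \<theta>) = (\<Sum>i<p. k * \<sigma> (\<Prod>t<i. (\<sigma> ^^ t) k) * (\<sigma> ^^ Suc i) \<theta>)"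
    unfolding hilbert_resolvent_def by (simp add: hom_sum hom_mult sum_distrib_left mult.assoc)
  also have "\<dots> = (\<Sum>i<p. g (Suc i))" unfolding g_def partial_norm_Suc ..
  also have "\<dots> = (\<Sum>i<p. g i)"
    using assms by (intro sum_lessThan_rotate) (simp add: g_def norm_KF_def funpow_p_eq_id)
  finally show ?thesis unfolding hilbert_resolvent_def g_def .
qed

lemma hilbert_resolvent_nonzero: "\<exists>j. hilbert_resolvent k (\<alpha> ^ j) \<noteq> 0"
proof (rule ccontr)
  define c where "c i = (\<Prod>t<i. (\<sigma> ^^ t) k)" for i
  assume "\<nexists>j. hilbert_resolvent k (\<alpha> ^ j) \<noteq> 0"
  moreover have "hilbert_resolvent k (\<alpha> ^ j) = \<alpha> ^ j * (\<Sum>i<p. c i * \<xi> ^ (j * i))" for j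
    unfolding hilbert_resolvent_def c_def
    by (simp add: funpow_alpha_power sum_distrib_left mult_ac)
  ultimately have "(\<Sum>i<p. c i * \<xi> ^ (j * i)) = 0" for j using alpha_nonzero by simp
  then have "(\<Sum>j<p. \<Sum>i<p. c i * \<xi> ^ (j * i)) = 0" by simp
  moreover have "c 0 = 1" unfolding c_def by simp
  ultimately show False
    using sum_sum_primitive_root_powers[OF primitive_xi p_pos, of c] of_nat_p_nonzero by simp
qed

theorem hilbert90:
  assumes "k \<noteq> 0" "N k = 1"
  shows "\<exists>\<beta>. \<beta> \<noteq> 0 \<and> \<sigma> \<beta> = \<beta> * k"
proof -
  obtain j where b: "hilbert_resolvent k (\<alpha> ^ j) \<noteq> 0" using hilbert_resolvent_nonzero by blast
  define \<beta> where "\<beta> = inverse (hilbert_resolvent k (\<alpha> ^ j))"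
  have "\<sigma> \<beta> = \<beta> * k"
    using sigma_hilbert_resolvent[OF assms(2), of "\<alpha> ^ j"] assms(1) b hom_nonzero[OF b]
    unfolding \<beta>_def hom_inverse by (simp add: field_simps)
  moreover have "\<beta> \<noteq> 0" unfolding \<beta>_def using b by simp
  ultimately show ?thesis by blast
qed

lemma norm_eq_xi_power:
  assumes "\<gamma> \<noteq> 0" "\<sigma> \<gamma> = \<gamma> * u ^ p"
  shows "\<exists>c. N u = \<xi> ^ c"
proof -
  have "N \<gamma> = N \<gamma> * N u ^ p"
    using norm_sigma[of \<gamma>] assms(2) by (simp add: norm_mult norm_power)
  then have "N u ^ p = 1" using norm_nonzero[OF assms(1)] by simp
  then show ?thesis using root_of_unity_eq_primitive_root_power[OF primitive_xi p_pos] by blast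
qed

lemma pclass_in_epsF_if_norm_eq_1:
  assumes "\<gamma> \<noteq> 0" "k \<noteq> 0" "\<sigma> \<gamma> = \<gamma> * k ^ p" "N k = 1"
  shows "pclass p \<gamma> \<in> epsF p F"
proof -
  obtain \<beta> where \<beta>: "\<beta> \<noteq> 0" "\<sigma> \<beta> = \<beta> * k" using hilbert90 assms(2,4) by blast
  define f where "f = \<gamma> / \<beta> ^ p"
  have "\<sigma> f = f" unfolding f_def using assms(2,3) \<beta> by (simp add: hom_divide hom_power power_mult_distrib)
  then have "f \<in> F" by (rule fixed_field)
  moreover have "f \<noteq> 0" unfolding f_def using assms(1) \<beta>(1) by simp
  moreover have "pclass p \<gamma> = pclass p (f * \<beta> ^ p)" unfolding f_def using \<beta>(1) by simp
  ultimately show ?thesis unfolding epsF_def using pclass_mult_power[OF \<beta>(1)] by auto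
qed

theorem J1_eq_epsF:
  assumes "\<nexists>l. l \<noteq> 0 \<and> N l = \<xi>"
  shows "J1 p \<sigma> = epsF p F"
proof
  show "J1 p \<sigma> \<subseteq> epsF p F"
  proof
    fix X assume "X \<in> J1 p \<sigma>"
    then obtain \<gamma> u where \<gamma>: "X = pclass p \<gamma>" "\<gamma> \<noteq> 0" "u \<noteq> 0" "\<sigma> \<gamma> = \<gamma> * u ^ p"
      by (rule J1E)
    obtain c where c: "N u = \<xi> ^ c" using norm_eq_xi_power[OF \<gamma>(2,4)] by blast
    have "p dvd c"
    proof (rule ccontr)
      assume "\<not> p dvd c"
      then obtain m where "(\<xi> ^ c) ^ m = \<xi>"
        using prime_primitive_root_power_generates[OF prime_p primitive_xi] by blast
      then have "N (u ^ m) = \<xi>" using c by (simp add: norm_power)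
      then show False using assms power_not_zero[OF \<gamma>(3)] by blast
    qed
    then have "N u = 1" using c primitive_root_power_eq_1_iff[OF primitive_xi p_pos] by simp
    then show "X \<in> epsF p F" using pclass_in_epsF_if_norm_eq_1 \<gamma> by simp
  qed
qed (rule epsF_subset_J1)

lemma exists_sigma_eq_mult_power:
  assumes "l \<noteq> 0" "N l = \<xi>"
  shows "\<exists>\<delta>. \<delta> \<noteq> 0 \<and> \<sigma> \<delta> = \<delta> * l ^ p"
proof -
  have "N (l ^ p) = 1" using assms(2) primitive_xi by (simp add: norm_power primitive_root_def)
  then show ?thesis using hilbert90[of "l ^ p"] assms(1) by simp
qed

context
  fixes l \<delta> :: 'k
  assumes l: "l \<noteq> 0" "N l = \<xi>" and \<delta>: "\<delta> \<noteq> 0" "\<sigma> \<delta> = \<delta> * l ^ p"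
begin

lemma sigma_delta_power: "\<sigma> (\<delta> ^ i) = \<delta> ^ i * (l ^ i) ^ p"
  using \<delta>(2) by (simp add: hom_power power_mult_distrib flip: power_mult) (simp add: mult.commute)

lemma cyc_class_subset_J1: "cyc_class p \<delta> \<subseteq> J1 p \<sigma>"
proof
  fix X assume "X \<in> cyc_class p \<delta>"
  then obtain i where "X = pclass p (\<delta> ^ i)" unfolding cyc_class_def by blast
  moreover have "\<delta> ^ i \<noteq> 0" "l ^ i \<noteq> 0" using \<delta>(1) l(1) by simp_all
  ultimately show "X \<in> J1 p \<sigma>" using pclass_in_J1_iff sigma_delta_power by blast
qed

lemma J1_subset_class_prod: "J1 p \<sigma> \<subseteq> class_prod p (epsF p F) (cyc_class p \<delta>)"
proof
  fix X assume "X \<in> J1 p \<sigma>"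
  then obtain \<gamma> u where \<gamma>: "X = pclass p \<gamma>" "\<gamma> \<noteq> 0" "u \<noteq> 0" "\<sigma> \<gamma> = \<gamma> * u ^ p"
    by (rule J1E)
  obtain c where c: "N u = \<xi> ^ c" using norm_eq_xi_power[OF \<gamma>(2,4)] by blast
  define k where "k = u / l ^ c"
  define \<gamma>' where "\<gamma>' = \<gamma> / \<delta> ^ c"
  have "u = k * l ^ c" unfolding k_def using l(1) by simp
  then have "N k * \<xi> ^ c = \<xi> ^ c" using c l(2) by (simp add: norm_mult norm_power)
  then have "N k = 1" using xi_nonzero by simp
  moreover have "\<sigma> \<gamma>' = \<gamma>' * k ^ p"
    unfolding \<gamma>'_def k_def using \<gamma>(4) l(1) \<delta>(1)
    by (simp add: hom_divide sigma_delta_power power_divide)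
  moreover have "\<gamma>' \<noteq> 0" "k \<noteq> 0" unfolding \<gamma>'_def k_def using \<gamma> \<delta>(1) l(1) by simp_all
  ultimately have "pclass p \<gamma>' \<in> epsF p F" using pclass_in_epsF_if_norm_eq_1 by blast
  moreover have "pclass p (\<delta> ^ c) \<in> cyc_class p \<delta>" unfolding cyc_class_def by blast
  moreover have "X = pclass p (\<gamma>' * \<delta> ^ c)" unfolding \<gamma>'_def using \<gamma>(1) \<delta>(1) by simp
  ultimately show "X \<in> class_prod p (epsF p F) (cyc_class p \<delta>)"
    unfolding class_prod_def using \<open>\<gamma>' \<noteq> 0\<close> \<delta>(1) by fastforce
qed

lemma dvd_if_pclass_delta_power_in_F:
  assumes "f \<in> F" "pclass p f = pclass p (\<delta> ^ i)"
  shows "p dvd i"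
proof -
  obtain u where u: "u \<noteq> 0" "\<delta> ^ i = f * u ^ p" using pclass_eqD[OF assms(2)[symmetric]] by blast
  have "f \<noteq> 0" using u \<delta>(1) by auto
  have "f * \<sigma> u ^ p = f * (u * l ^ i) ^ p"
    using sigma_delta_power[of i] u assms(1) by (simp add: hom_mult hom_power hom_fixes power_mult_distrib)
  then have "(\<sigma> u / (u * l ^ i)) ^ p = 1" using \<open>f \<noteq> 0\<close> u(1) l(1) by (simp add: power_divide)
  then obtain e where e: "\<sigma> u / (u * l ^ i) = \<xi> ^ e"
    using root_of_unity_eq_primitive_root_power[OF primitive_xi p_pos] by blast
  have "N (\<xi> ^ e) = 1" using primitive_xi xi_in_F
    by (simp add: norm_power norm_of_F primitive_root_def)
  then have "N u = N u * \<xi> ^ i"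
    using norm_sigma[of u] e u(1) l by (simp add: field_simps norm_mult norm_power)
  then have "\<xi> ^ i = 1" using norm_nonzero[OF u(1)] by simp
  then show ?thesis using primitive_root_power_eq_1_iff[OF primitive_xi p_pos] by simp
qed

lemma epsF_inter_cyc_class: "epsF p F \<inter> cyc_class p \<delta> = {pclass p 1}"
proof
  show "epsF p F \<inter> cyc_class p \<delta> \<subseteq> {pclass p 1}"
  proof
    fix X assume "X \<in> epsF p F \<inter> cyc_class p \<delta>"
    then obtain f i where "f \<in> F" "X = pclass p f" "X = pclass p (\<delta> ^ i)"
      unfolding epsF_def cyc_class_def by blast
    then obtain q where "i = q * p" using dvd_if_pclass_delta_power_in_F by (metis dvdE mult.commute)
    then have "X = pclass p (1 * (\<delta> ^ q) ^ p)" using \<open>X = pclass p (\<delta> ^ i)\<close> by (simp add: power_mult)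
    then show "X \<in> {pclass p 1}" using pclass_mult_power[of "\<delta> ^ q" p 1] \<delta>(1) by simp
  qed
  have "1 \<in> F" using subfield unfolding is_subfield_def by blast
  then show "{pclass p 1} \<subseteq> epsF p F \<inter> cyc_class p \<delta>"
    unfolding epsF_def cyc_class_def by (auto intro: exI[of _ 0])
qed

theorem J1_internal_direct_sum: "internal_direct_sum p (J1 p \<sigma>) (epsF p F) (cyc_class p \<delta>)"
  unfolding internal_direct_sum_def
  using J1_subset_class_prod epsF_inter_cyc_class
    class_prod_subset_J1[OF epsF_subset_J1 cyc_class_subset_J1] by blast

end

end

theorem lemma2:
  fixes p :: nat and F :: "'k::field set" and \<xi> a \<alpha> :: 'k and \<sigma> :: "'k \<Rightarrow> 'k"
  assumes "prime p"
    and "of_nat p \<noteq> (0::'k)"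
    and "is_subfield F"
    and "\<xi> \<in> F" and "primitive_root p \<xi>"
    and "a \<in> F" and "a \<noteq> 0" and "\<not> (\<exists>b\<in>F. b ^ p = a)"
    and "\<alpha> ^ p = a"
    and "UNIV = {\<Sum>i<p. c i * \<alpha> ^ i | c. \<forall>i. c i \<in> F}"
    and "is_F_automorphism F \<sigma>" and "\<sigma> \<alpha> = \<xi> * \<alpha>"
  shows "(\<not> (\<exists>l. l \<noteq> 0 \<and> norm_KF p \<sigma> l = \<xi>) \<longrightarrow> J1 p \<sigma> = epsF p F)
       \<and> ((\<exists>l. l \<noteq> 0 \<and> norm_KF p \<sigma> l = \<xi>) \<longrightarrow>
            (\<exists>l \<delta>. l \<noteq> 0 \<and> \<delta> \<noteq> 0 \<and> norm_KF p \<sigma> l = \<xi> \<and> \<sigma> \<delta> = \<delta> * l ^ p)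
          \<and> (\<forall>l \<delta>. l \<noteq> 0 \<and> \<delta> \<noteq> 0 \<and> norm_KF p \<sigma> l = \<xi> \<and> \<sigma> \<delta> = \<delta> * l ^ p \<longrightarrow>
               internal_direct_sum p (J1 p \<sigma>) (epsF p F) (cyc_class p \<delta>)))"
proof -
  txt \<open>Of the hypotheses on \<open>a\<close> only \<open>a \<noteq> 0\<close> is needed: the power basis and the
    action of \<open>\<sigma>\<close> on \<open>\<alpha>\<close> already determine the extension.\<close>
  have "\<alpha> \<noteq> 0" using assms(1,7,9) prime_gt_0_nat by auto
  then interpret cyclic_kummer F \<sigma> p \<xi> \<alpha>
    using assms by unfold_locales auto
  show ?thesis using J1_eq_epsF exists_sigma_eq_mult_power J1_internal_direct_sum by blast
qed

end
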